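(* Let $x\in\mathbb{R}^d$ and suppose $\beta\ge\gamma$. Then for every $C\ge 3$, $$\mathbb{P}\Big(\sum_{n\ge2}\gamma_n\mathbf{1}_{X_n\in kNN_n(x)}\le C\Big)=0 .$$
   Context: $X_1,X_2,\dots$ are i.i.d. random vectors in $\mathbb{R}^d$ (copies of the input $X$). Parameters: $0<\beta<1$, $0<\gamma\le1$, $k_n=\lfloor n^\beta\rfloor$, $\gamma_n=n^{-\gamma}$. For $n\ge1$, $\|X-x\|_{(k,n)}$ is the $k$-th smallest value among $\|X_1-x\|,\dots,\|X_n-x\|$ (Euclidean norm), and for $n\ge2$, $\{X_n\in kNN_n(x)\}:=\{\|X_n-x\|\le\|X-x\|_{(k_n,n-1)}\}$. *)

theory Defs
  imports "HOL-Probability.Probability"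
begin

text \<open>The k-th smallest value among norm (X 1 w - x), ..., norm (X n w - x)
  (sample indices start at 1; k is 1-based).\<close>
definition kth_dist :: "(nat \<Rightarrow> 'a \<Rightarrow> 'v::real_normed_vector) \<Rightarrow> 'v \<Rightarrow> nat \<Rightarrow> nat \<Rightarrow> 'a \<Rightarrow> real" where
  "kth_dist X x k n w = sort (map (\<lambda>i. norm (X i w - x)) [1..<n+1]) ! (k - 1)"

definition k_seq :: "real \<Rightarrow> nat \<Rightarrow> nat" where
  "k_seq \<beta> n = nat \<lfloor>real n powr \<beta>\<rfloor>"

definition in_kNN :: "(nat \<Rightarrow> 'a \<Rightarrow> 'v::real_normed_vector) \<Rightarrow> 'v \<Rightarrow> real \<Rightarrow> nat \<Rightarrow> 'a \<Rightarrow> bool" where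
  "in_kNN X x \<beta> n w \<longleftrightarrow> norm (X n w - x) \<le> kth_dist X x (k_seq \<beta> n) (n - 1) w"

end

theory Submission
  imports Defs "HOL-Real_Asymp.Real_Asymp"
begin

text \<open>
  Put \<open>D_i = \<parallel>X_i - x\<parallel>\<close>, so that \<open>X_n \<in> kNN_n(x)\<close> iff fewer than \<open>k_n\<close> of
  \<open>D_1, \<dots>, D_(n-1)\<close> are smaller than \<open>D_n\<close>. Choose a quantile \<open>t_n\<close> of \<open>D_1\<close> with
  \<open>P(D_1 \<le> t_n) \<ge> k_n/(4n) \<ge> P(D_1 < t_n)\<close>. By a Chernoff bound, at least \<open>k_n\<close> of
  \<open>D_1, \<dots>, D_(n-1)\<close> fall below \<open>t_n\<close> with probability at most \<open>exp(-k_n/2)\<close>, which is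
  summable since \<open>k_n \<approx> n^\<beta>\<close>; by Borel--Cantelli this happens only finitely often, and
  from then on \<open>D_n \<le> t_n\<close> forces \<open>X_n \<in> kNN_n(x)\<close>. The events \<open>D_n \<le> t_n\<close> are
  independent with \<open>\<Sum> \<gamma>_n P(D_n \<le> t_n) \<ge> \<Sum> n^(\<beta>-\<gamma>)/(8n) = \<infinity>\<close> because
  \<open>\<beta> \<ge> \<gamma>\<close>, and an exponential moment bound shows that such a weighted sum of
  independent indicators diverges almost surely.
\<close>

section \<open>Nearest-neighbour ranks\<close>

lemma le_sort_nth_iff_length_filter_less:
  fixes ys :: "real list"
  assumes "1 \<le> k" "k \<le> length ys"
  shows "a \<le> sort ys ! (k - 1) \<longleftrightarrow> length (filter (\<lambda>y. y < a) ys) < k"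
proof -
  define s where "s = sort ys"
  have sorted: "sorted s" and len: "length s = length ys" by (auto simp: s_def)
  have "length (filter (\<lambda>y. y < a) ys) = length (filter (\<lambda>y. y < a) s)"
    unfolding s_def by (metis mset_filter mset_sort size_mset)
  also have "\<dots> = card {j. j < length s \<and> s ! j < a}"
    by (rule length_filter_conv_card)
  finally have count: "length (filter (\<lambda>y. y < a) ys) = card {j. j < length s \<and> s ! j < a}" .
  show ?thesis unfolding count s_def[symmetric]
  proof
    assume a: "a \<le> s ! (k - 1)"
    have "{j. j < length s \<and> s ! j < a} \<subseteq> {..<k - 1}"
    proof
      fix j assume j: "j \<in> {j. j < length s \<and> s ! j < a}"
      show "j \<in> {..<k - 1}"
      proof (rule ccontr)
        assume "j \<notin> {..<k - 1}"
        then have "s ! (k - 1) \<le> s ! j" using sorted j by (intro sorted_nth_mono) auto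
        then show False using a j by auto
      qed
    qed
    then have "card {j. j < length s \<and> s ! j < a} \<le> k - 1"
      using card_mono[of "{..<k - 1}"] by fastforce
    then show "card {j. j < length s \<and> s ! j < a} < k" using assms by linarith
  next
    assume card_less: "card {j. j < length s \<and> s ! j < a} < k"
    show "a \<le> s ! (k - 1)"
    proof (rule ccontr)
      assume "\<not> a \<le> s ! (k - 1)"
      then have "s ! (k - 1) < a" by simp
      have "{..<k} \<subseteq> {j. j < length s \<and> s ! j < a}"
      proof
        fix j assume "j \<in> {..<k}"
        then have j: "j \<le> k - 1" "j < length s" using assms len by auto
        then have "s ! j \<le> s ! (k - 1)" using sorted assms len by (intro sorted_nth_mono) auto
        then show "j \<in> {j. j < length s \<and> s ! j < a}" using \<open>s ! (k - 1) < a\<close> j by auto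
      qed
      then show False
        using card_mono[of "{j. j < length s \<and> s ! j < a}" "{..<k}"] card_less by auto
    qed
  qed
qed

lemma length_filter_map_upt:
  "length (filter P (map f [a..<b])) = card {i \<in> {a..<b}. P (f i)}"
proof -
  have "length (filter P (map f [a..<b])) = length (filter (P \<circ> f) [a..<b])"
    by (simp add: filter_map)
  also have "\<dots> = card (set (filter (P \<circ> f) [a..<b]))"
    by (rule distinct_card[symmetric]) simp
  also have "set (filter (P \<circ> f) [a..<b]) = {i \<in> {a..<b}. P (f i)}" by auto
  finally show ?thesis .
qed

lemma k_seq_bounds:
  assumes "2 \<le> n" "0 < \<beta>"
  shows "1 \<le> k_seq \<beta> n" "real n powr \<beta> / 2 \<le> real (k_seq \<beta> n)"
proof -
  have one_le: "1 \<le> real n powr \<beta>" using assms by (intro ge_one_powr_ge_zero) auto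
  then have k: "real (k_seq \<beta> n) = real_of_int \<lfloor>real n powr \<beta>\<rfloor>"
    by (simp add: k_seq_def)
  show "1 \<le> k_seq \<beta> n" using one_le by (simp add: k_seq_def le_nat_iff one_le_floor)
  have "real n powr \<beta> - 1 < real_of_int \<lfloor>real n powr \<beta>\<rfloor>" "1 \<le> \<lfloor>real n powr \<beta>\<rfloor>"
    using one_le by (linarith, simp add: one_le_floor)
  then show "real n powr \<beta> / 2 \<le> real (k_seq \<beta> n)"
    unfolding k by linarith
qed

lemma k_seq_less:
  assumes "2 \<le> n" "\<beta> < 1"
  shows "k_seq \<beta> n < n"
proof -
  have "real n powr \<beta> < real n powr 1" using assms by (intro powr_less_mono) auto
  then have "\<lfloor>real n powr \<beta>\<rfloor> < int n" using assms by (simp add: floor_less_iff)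
  then show ?thesis unfolding k_seq_def by (simp add: nat_less_iff)
qed

lemma in_kNN_iff_rank:
  fixes X :: "nat \<Rightarrow> 'a \<Rightarrow> 'v::real_normed_vector"
  assumes "2 \<le> n" "0 < \<beta>" "\<beta> < 1"
  shows "in_kNN X x \<beta> n w \<longleftrightarrow>
    card {i \<in> {1..<n}. norm (X i w - x) < norm (X n w - x)} < k_seq \<beta> n"
proof -
  have "n - 1 + 1 = n" using assms by simp
  then show ?thesis
    unfolding in_kNN_def kth_dist_def
    using k_seq_bounds(1)[OF assms(1,2)] k_seq_less[OF assms(1,3)]
    by (subst le_sort_nth_iff_length_filter_less) (simp_all add: length_filter_map_upt del: length_filter_map)
qed

lemma powr_neg_le_1:
  assumes "0 \<le> a"
  shows "real n powr (- a) \<le> 1"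
proof (cases "n = 0")
  case False
  then have "real n powr (- a) \<le> real n powr 0" using assms by (intro powr_mono) auto
  then show ?thesis using False by simp
qed simp

lemma summable_exp_neg_k_seq:
  assumes "0 < \<beta>"
  shows "summable (\<lambda>n. exp (- real (k_seq \<beta> n) / 2))"
proof -
  have "summable (\<lambda>n. exp (- (real n powr \<beta>) / 4))"
  proof (rule summable_comparison_test_bigo)
    show "summable (\<lambda>n. norm (1 / real n ^ 2))"
      using inverse_power_summable[of 2, where 'a=real] by (simp add: divide_inverse)
    show "(\<lambda>n. exp (- (real n powr \<beta>) / 4)) \<in> O(\<lambda>n. 1 / real n ^ 2)"
      using assms by real_asymp
  qed
  then show ?thesis
    by (rule summable_comparison_test'[where N=2]) (use k_seq_bounds(2)[OF _ assms] in auto)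
qed

lemma not_summable_powr_k_seq:
  assumes "0 < \<beta>" "\<gamma> \<le> \<beta>"
  shows "\<not> summable (\<lambda>n. real n powr (- \<gamma>) * real (k_seq \<beta> n) / real n)"
proof
  assume "summable (\<lambda>n. real n powr (- \<gamma>) * real (k_seq \<beta> n) / real n)"
  then have "summable (\<lambda>n. 2 * (real n powr (- \<gamma>) * real (k_seq \<beta> n) / real n))"
    by (rule summable_mult)
  moreover have "norm (inverse (real n)) \<le> 2 * (real n powr (- \<gamma>) * real (k_seq \<beta> n) / real n)"
    if n: "2 \<le> n" for n
  proof -
    have "1 \<le> real n powr (\<beta> - \<gamma>)"
      using n assms by (intro ge_one_powr_ge_zero) auto
    also have "\<dots> = real n powr (- \<gamma>) * real n powr \<beta>"
      by (simp add: powr_add[symmetric])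
    also have "\<dots> \<le> real n powr (- \<gamma>) * (2 * real (k_seq \<beta> n))"
      using k_seq_bounds(2)[OF n assms(1)] by (intro mult_left_mono) auto
    finally have "1 / real n \<le> real n powr (- \<gamma>) * (2 * real (k_seq \<beta> n)) / real n"
      by (rule divide_right_mono) simp
    then show ?thesis by (simp add: inverse_eq_divide ac_simps)
  qed
  ultimately have "summable (\<lambda>n. inverse (real n))"
    by (rule summable_comparison_test')
  then show False using not_summable_harmonic by blast
qed

section \<open>Exponential moments of i.i.d. sequences\<close>

lemma exp_neg_le_1_minus_div_exp_1:
  fixes g :: real
  assumes "0 \<le> g" "g \<le> 1"
  shows "exp (- g) \<le> 1 - g / exp 1"
proof -
  have "exp (- g) * (1 + g) \<le> exp (- g) * exp g"
    by (intro mult_left_mono exp_ge_add_one_self) auto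
  also have "exp (- g) * exp g = 1" by (simp flip: exp_add)
  finally have "exp (- g) \<le> 1 - g * exp (- g)" by (simp add: algebra_simps)
  moreover have "g * exp (- 1) \<le> g * exp (- g)" using assms by (intro mult_left_mono) auto
  moreover have "g * exp (- 1) = g / exp 1" by (simp add: exp_minus field_simps)
  ultimately show ?thesis by linarith
qed

lemma not_summable_nonneg_imp_unbounded:
  fixes f :: "nat \<Rightarrow> real"
  assumes "\<And>n. 0 \<le> f n" "\<not> summable f"
  shows "\<exists>N. K \<le> sum f {m..<N}"
proof (rule ccontr)
  assume bounded: "\<not> ?thesis"
  have "(\<Sum>n<N. f (n + m)) < K" for N
  proof -
    have "(\<Sum>n<N. f (n + m)) = sum f {m..<N + m}"
      using sum.shift_bounds_nat_ivl[of f 0 m N] by (simp add: atLeast0LessThan)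
    also have "\<dots> < K" using bounded by (simp add: not_le)
    finally show ?thesis .
  qed
  then have "summable (\<lambda>n. f (n + m))"
    using assms(1) by (intro summableI_nonneg_bounded[where x=K]) (auto intro: less_imp_le)
  then show False using assms(2) by simp
qed

lemma ennreal_sum_le_suminf:
  fixes f :: "nat \<Rightarrow> real"
  assumes "finite A" "\<And>n. 0 \<le> f n"
  shows "ennreal (sum f A) \<le> (\<Sum>n. ennreal (f n))"
proof -
  have "ennreal (sum f A) = (\<Sum>n\<in>A. ennreal (f n))"
    using assms(2) by (simp add: sum_ennreal)
  also have "\<dots> \<le> (\<Sum>n. ennreal (f n))"
    by (rule sum_le_suminf[OF summableI assms(1)]) simp
  finally show ?thesis .
qed

lemma (in prob_space) prob_ge_le_exp_expectation:
  assumes [measurable]: "Y \<in> borel_measurable M" and "integrable M (\<lambda>w. exp (Y w))"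
  shows "prob {w \<in> space M. a \<le> Y w} \<le> exp (- a) * expectation (\<lambda>w. exp (Y w))"
proof -
  have "prob {w \<in> space M. a \<le> Y w} = prob {w \<in> space M. exp a \<le> exp (Y w)}" by simp
  also have "\<dots> \<le> expectation (\<lambda>w. exp (Y w)) / exp a"
    by (rule integral_Markov_inequality_measure[where A="space M"]) (use assms in auto)
  finally show ?thesis by (simp add: exp_minus field_simps)
qed

lemma (in prob_space) prob_le_ennreal_eq_0_if_AE_infinite:
  assumes [measurable]: "S \<in> borel_measurable M" and "AE w in M. S w = \<infinity>"
  shows "{w \<in> space M. S w \<le> ennreal C} \<in> events \<and> prob {w \<in> space M. S w \<le> ennreal C} = 0"
proof
  show events: "{w \<in> space M. S w \<le> ennreal C} \<in> events" by measurable
  have "AE w in M. \<not> S w \<le> ennreal C"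
    using assms(2) by (rule eventually_mono) (simp add: top_unique)
  moreover have "(AE w in M. \<not> S w \<le> ennreal C) \<longleftrightarrow> emeasure M {w \<in> space M. S w \<le> ennreal C} = 0"
    using events by (rule AE_iff_measurable) simp
  ultimately show "prob {w \<in> space M. S w \<le> ennreal C} = 0" by (simp add: measure_def)
qed

lemma real_card_filter_eq_sum:
  assumes "finite I"
  shows "real (card {i \<in> I. P i}) = (\<Sum>i\<in>I. if P i then 1 else 0)"
  using assms by (simp add: sum.inter_filter[symmetric])

text \<open>The sample is indexed from 1; \<open>D 0\<close> is only required to be measurable.\<close>

locale iid_sequence = prob_space M for M :: "'a measure" +
  fixes N :: "'b measure" and D :: "nat \<Rightarrow> 'a \<Rightarrow> 'b"
  assumes measurable_D [measurable]: "\<And>i. D i \<in> M \<rightarrow>\<^sub>M N"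
    and indep_D: "indep_vars (\<lambda>_. N) D {1..}"
    and distr_D: "\<And>i. 1 \<le> i \<Longrightarrow> distr M N (D i) = distr M N (D 1)"
begin

lemma iid_sequence_compose:
  assumes [measurable]: "h \<in> N \<rightarrow>\<^sub>M N'"
  shows "iid_sequence M N' (\<lambda>i w. h (D i w))"
proof unfold_locales
  show "indep_vars (\<lambda>_. N') (\<lambda>i w. h (D i w)) {1..}"
    by (rule indep_vars_compose2[OF indep_D]) simp
  show "distr M N' (\<lambda>w. h (D i w)) = distr M N' (\<lambda>w. h (D 1 w))" if "1 \<le> i" for i
    using distr_distr[of h N N' "D i" M] distr_distr[of h N N' "D 1" M] distr_D[OF that]
    by (simp add: comp_def)
qed simp

lemma expectation_exp_weighted_hits:
  assumes I: "finite I" "I \<subseteq> {1..}" and A: "\<And>i. i \<in> I \<Longrightarrow> A i \<in> sets N"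
  shows "expectation (\<lambda>w. exp (\<Sum>i\<in>I. c i * indicator (A i) (D i w)))
    = (\<Prod>i\<in>I. 1 + (exp (c i) - 1) * prob {w \<in> space M. D 1 w \<in> A i})"
proof -
  define \<phi> where "\<phi> i y = exp (c i * indicator (A i) y)" for i y
  have \<phi>_meas: "\<phi> i \<in> borel_measurable N" if "i \<in> I" for i
    using A[OF that] unfolding \<phi>_def by measurable
  have \<phi>_eq: "\<phi> i y = 1 + (exp (c i) - 1) * indicator (A i) y" for i y
    by (simp add: \<phi>_def indicator_def)
  have \<phi>_int: "integrable M (\<lambda>w. \<phi> i (D j w))" if "i \<in> I" for i j
  proof (rule integrable_const_bound[where B="exp \<bar>c i\<bar>"])
    show "AE w in M. norm (\<phi> i (D j w)) \<le> exp \<bar>c i\<bar>"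
      by (auto simp: \<phi>_def indicator_def)
  qed (use \<phi>_meas[OF that] in simp)
  have "expectation (\<lambda>w. exp (\<Sum>i\<in>I. c i * indicator (A i) (D i w)))
      = expectation (\<lambda>w. \<Prod>i\<in>I. \<phi> i (D i w))"
    by (simp only: \<phi>_def exp_sum[OF I(1)])
  also have "\<dots> = (\<Prod>i\<in>I. expectation (\<lambda>w. \<phi> i (D i w)))"
  proof (rule indep_vars_lebesgue_integral[OF I(1) _ \<phi>_int])
    show "indep_vars (\<lambda>_. borel) (\<lambda>i w. \<phi> i (D i w)) I"
      by (rule indep_vars_compose2[OF indep_vars_subset[OF indep_D I(2)]]) (use \<phi>_meas in auto)
  qed
  also have "\<dots> = (\<Prod>i\<in>I. 1 + (exp (c i) - 1) * prob {w \<in> space M. D 1 w \<in> A i})"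
  proof (rule prod.cong)
    fix i assume i: "i \<in> I"
    define S where "S = {w \<in> space M. D 1 w \<in> A i}"
    have S: "S \<in> events" unfolding S_def using A[OF i] by measurable
    have "expectation (\<lambda>w. \<phi> i (D i w)) = integral\<^sup>L (distr M N (D i)) (\<phi> i)"
      using \<phi>_meas[OF i] by (simp add: integral_distr)
    also have "\<dots> = integral\<^sup>L (distr M N (D 1)) (\<phi> i)"
      using i I(2) by (subst distr_D) auto
    also have "\<dots> = expectation (\<lambda>w. \<phi> i (D 1 w))"
      using \<phi>_meas[OF i] by (simp add: integral_distr)
    also have "\<dots> = expectation (\<lambda>w. 1 + (exp (c i) - 1) * indicator S w)"
      by (rule Bochner_Integration.integral_cong) (auto simp: \<phi>_eq S_def indicator_def)
    also have "\<dots> = expectation (\<lambda>w. 1) + expectation (\<lambda>w. (exp (c i) - 1) * indicator S w)"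
      by (rule Bochner_Integration.integral_add) (use S in \<open>auto simp: emeasure_eq_measure\<close>)
    also have "\<dots> = 1 + (exp (c i) - 1) * prob S"
      using S by (simp add: prob_space)
    finally show "expectation (\<lambda>w. \<phi> i (D i w))
      = 1 + (exp (c i) - 1) * prob {w \<in> space M. D 1 w \<in> A i}" unfolding S_def .
  qed simp
  finally show ?thesis .
qed

lemma prob_card_hits_ge:
  assumes [measurable]: "A \<in> sets N"
  shows "prob {w \<in> space M. real k \<le> real (card {i \<in> {1..<n}. D i w \<in> A})}
    \<le> exp (2 * real n * prob {w \<in> space M. D 1 w \<in> A} - real k)"
proof -
  define q where "q = prob {w \<in> space M. D 1 w \<in> A}"
  have q: "0 \<le> q" by (simp add: q_def)
  define Y :: "'a \<Rightarrow> real" where "Y w = (\<Sum>i\<in>{1..<n}. 1 * indicator A (D i w))" for w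
  have Y_meas: "Y \<in> borel_measurable M" unfolding Y_def by measurable
  have card_eq: "real (card {i \<in> {1..<n}. D i w \<in> A}) = Y w" for w
  proof -
    have "real (card {i \<in> {1..<n}. D i w \<in> A}) = (\<Sum>i\<in>{1..<n}. if D i w \<in> A then 1 else 0)"
      by (rule real_card_filter_eq_sum) simp
    also have "\<dots> = Y w"
      unfolding Y_def by (intro sum.cong) (auto simp: indicator_def)
    finally show ?thesis .
  qed
  have Y_le: "Y w \<le> real n" for w
  proof -
    have "Y w \<le> (\<Sum>i\<in>{1..<n}. 1)" unfolding Y_def by (intro sum_mono) (simp add: indicator_def)
    then show ?thesis by simp
  qed
  have "integrable M (\<lambda>w. exp (Y w))"
    by (rule integrable_const_bound[where B="exp (real n)"]) (use Y_meas Y_le in auto)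
  then have "prob {w \<in> space M. real k \<le> Y w} \<le> exp (- real k) * expectation (\<lambda>w. exp (Y w))"
    by (rule prob_ge_le_exp_expectation[OF Y_meas])
  also have "expectation (\<lambda>w. exp (Y w)) = (1 + (exp 1 - 1) * q) ^ (n - 1)"
    unfolding Y_def q_def by (subst expectation_exp_weighted_hits) auto
  also have "\<dots> \<le> exp (2 * q) ^ (n - 1)"
  proof (rule power_mono)
    show "1 + (exp 1 - 1) * q \<le> exp (2 * q)"
      using exp_le exp_ge_add_one_self[of "2 * q"] mult_right_mono[OF _ q, of "exp 1 - 1" 2] by linarith
    show "0 \<le> 1 + (exp 1 - 1) * q" using q by simp
  qed
  also have "\<dots> = exp (2 * real (n - 1) * q)"
    by (simp add: mult_ac flip: exp_of_nat_mult)
  also have "\<dots> \<le> exp (2 * real n * q)"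
    using q by (simp add: mult_right_mono)
  finally have "prob {w \<in> space M. real k \<le> Y w} \<le> exp (- real k) * exp (2 * real n * q)"
    by (simp add: mult_left_mono)
  then show ?thesis
    unfolding card_eq q_def by (simp add: mult.commute flip: exp_add)
qed

lemma prob_weighted_hits_le:
  assumes [measurable]: "\<And>n. A n \<in> sets N" and g: "\<And>n. 0 \<le> g n" "\<And>n. g n \<le> 1"
  shows "prob {w \<in> space M. (\<Sum>n\<in>{1..<L}. g n * indicator (A n) (D n w)) \<le> C}
    \<le> exp (C - (\<Sum>n\<in>{1..<L}. g n * prob {w \<in> space M. D 1 w \<in> A n} / exp 1))"
proof -
  define P where "P n = prob {w \<in> space M. D 1 w \<in> A n}" for n
  define Y :: "'a \<Rightarrow> real" where "Y w = (\<Sum>n\<in>{1..<L}. - g n * indicator (A n) (D n w))" for w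
  have Y_meas: "Y \<in> borel_measurable M" unfolding Y_def by measurable
  have "integrable M (\<lambda>w. exp (Y w))"
  proof (rule integrable_const_bound[where B=1])
    show "AE w in M. norm (exp (Y w)) \<le> 1"
      using g by (auto simp: Y_def intro!: sum_nonpos)
  qed (use Y_meas in simp)
  then have "prob {w \<in> space M. - C \<le> Y w} \<le> exp C * expectation (\<lambda>w. exp (Y w))"
    using prob_ge_le_exp_expectation[OF Y_meas, of "- C"] by simp
  also have "expectation (\<lambda>w. exp (Y w)) = (\<Prod>n\<in>{1..<L}. 1 + (exp (- g n) - 1) * P n)"
    unfolding Y_def P_def by (subst expectation_exp_weighted_hits) auto
  also have "\<dots> \<le> (\<Prod>n\<in>{1..<L}. exp (- (g n * P n / exp 1)))"
  proof (rule prod_mono, rule conjI)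
    fix n
    have P: "0 \<le> P n" "P n \<le> 1" by (simp_all add: P_def)
    have "exp (- g n) - 1 \<le> - (g n / exp 1)"
      using exp_neg_le_1_minus_div_exp_1[OF g(1,2)[of n]] by simp
    then have "(exp (- g n) - 1) * P n \<le> - (g n / exp 1) * P n"
      using P(1) by (rule mult_right_mono)
    then show "1 + (exp (- g n) - 1) * P n \<le> exp (- (g n * P n / exp 1))"
      using exp_ge_add_one_self[of "- (g n * P n / exp 1)"] by simp
    have "(1 - exp (- g n)) * P n \<le> 1"
      using P g(1)[of n] by (intro mult_le_one) auto
    then show "0 \<le> 1 + (exp (- g n) - 1) * P n" by (simp add: algebra_simps)
  qed
  also have "\<dots> = exp (\<Sum>n\<in>{1..<L}. - (g n * P n / exp 1))"
    by (rule exp_sum[symmetric]) simp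
  also have "exp C * \<dots> = exp (C - (\<Sum>n\<in>{1..<L}. g n * P n / exp 1))"
    by (simp add: sum_negf flip: exp_add)
  finally have "prob {w \<in> space M. - C \<le> Y w} \<le> exp (C - (\<Sum>n\<in>{1..<L}. g n * P n / exp 1))"
    by simp
  moreover have "{w \<in> space M. - C \<le> Y w}
      = {w \<in> space M. (\<Sum>n\<in>{1..<L}. g n * indicator (A n) (D n w)) \<le> C}"
    by (simp add: Y_def sum_negf)
  ultimately show ?thesis by (simp add: P_def)
qed

lemma prob_weighted_hits_bounded:
  assumes [measurable]: "\<And>n. A n \<in> sets N" and g: "\<And>n. 0 \<le> g n" "\<And>n. g n \<le> 1"
    and diverges: "\<not> summable (\<lambda>n. g n * prob {w \<in> space M. D 1 w \<in> A n})"
  shows "prob {w \<in> space M. \<forall>L. (\<Sum>n\<in>{1..<L}. g n * indicator (A n) (D n w)) \<le> C} = 0"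
proof -
  have "prob {w \<in> space M. \<forall>L. (\<Sum>n\<in>{1..<L}. g n * indicator (A n) (D n w)) \<le> C} \<le> e"
    if e: "0 < e" for e
  proof -
    have nonneg: "0 \<le> g n * prob {w \<in> space M. D 1 w \<in> A n} / exp 1" for n
      using g(1)[of n] by simp
    have "\<not> summable (\<lambda>n. g n * prob {w \<in> space M. D 1 w \<in> A n} / exp 1)"
      using diverges by simp
    then obtain L
      where L: "C - ln e \<le> (\<Sum>n\<in>{1..<L}. g n * prob {w \<in> space M. D 1 w \<in> A n} / exp 1)"
      using not_summable_nonneg_imp_unbounded[of "\<lambda>n. g n * prob {w \<in> space M. D 1 w \<in> A n} / exp 1", OF nonneg]
      by blast
    have "prob {w \<in> space M. \<forall>L. (\<Sum>n\<in>{1..<L}. g n * indicator (A n) (D n w)) \<le> C}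
        \<le> prob {w \<in> space M. (\<Sum>n\<in>{1..<L}. g n * indicator (A n) (D n w)) \<le> C}"
      by (rule finite_measure_mono) (blast, measurable)
    also have "\<dots> \<le> exp (C - (\<Sum>n\<in>{1..<L}. g n * prob {w \<in> space M. D 1 w \<in> A n} / exp 1))"
      by (rule prob_weighted_hits_le) (use g in auto)
    also have "\<dots> \<le> exp (ln e)" using L by simp
    also have "\<dots> = e" using e by simp
    finally show ?thesis .
  qed
  then have "prob {w \<in> space M. \<forall>L. (\<Sum>n\<in>{1..<L}. g n * indicator (A n) (D n w)) \<le> C} \<le> 0"
    by (rule field_le_epsilon) simp
  then show ?thesis by (simp add: measure_le_0_iff)
qed

lemma AE_weighted_hits_infinite:
  assumes [measurable]: "\<And>n. A n \<in> sets N" and g: "\<And>n. 0 \<le> g n" "\<And>n. g n \<le> 1"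
    and diverges: "\<not> summable (\<lambda>n. g n * prob {w \<in> space M. D 1 w \<in> A n})"
  shows "AE w in M. (\<Sum>n. ennreal (g n * indicator (A n) (D n w))) = \<infinity>"
proof -
  define S where "S w = (\<Sum>n. ennreal (g n * indicator (A n) (D n w)))" for w
  have S_meas [measurable]: "S \<in> borel_measurable M" unfolding S_def by measurable
  have partial_le_S: "ennreal (\<Sum>n\<in>{1..<L}. g n * indicator (A n) (D n w)) \<le> S w" for L w
    unfolding S_def by (rule ennreal_sum_le_suminf) (use g in auto)
  have "AE w in M. \<not> S w \<le> of_nat m" for m
  proof -
    have "{w \<in> space M. S w \<le> of_nat m}
        \<subseteq> {w \<in> space M. \<forall>L. (\<Sum>n\<in>{1..<L}. g n * indicator (A n) (D n w)) \<le> real m}"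
    proof
      fix w assume w: "w \<in> {w \<in> space M. S w \<le> of_nat m}"
      have "(\<Sum>n\<in>{1..<L}. g n * indicator (A n) (D n w)) \<le> real m" for L
      proof -
        have "ennreal (\<Sum>n\<in>{1..<L}. g n * indicator (A n) (D n w)) \<le> of_nat m"
          using order_trans[OF partial_le_S[of w L]] w by blast
        then show ?thesis by (simp add: ennreal_of_nat_eq_real_of_nat)
      qed
      with w show "w \<in> {w \<in> space M. \<forall>L. (\<Sum>n\<in>{1..<L}. g n * indicator (A n) (D n w)) \<le> real m}"
        by simp
    qed
    then have "prob {w \<in> space M. S w \<le> of_nat m}
        \<le> prob {w \<in> space M. \<forall>L. (\<Sum>n\<in>{1..<L}. g n * indicator (A n) (D n w)) \<le> real m}"
      by (rule finite_measure_mono) measurable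
    also have "\<dots> = 0" by (rule prob_weighted_hits_bounded[OF assms])
    finally have "prob {w \<in> space M. S w \<le> of_nat m} = 0" by (simp add: measure_le_0_iff)
    moreover have "{w \<in> space M. S w \<le> of_nat m} \<in> events" by measurable
    then have "(AE w in M. \<not> S w \<le> of_nat m) \<longleftrightarrow> emeasure M {w \<in> space M. S w \<le> of_nat m} = 0"
      by (rule AE_iff_measurable) simp
    ultimately show ?thesis by (simp add: emeasure_eq_measure)
  qed
  then have "AE w in M. \<forall>m::nat. \<not> S w \<le> of_nat m"
    by (simp add: AE_all_countable)
  then have "AE w in M. S w = \<infinity>"
  proof (rule eventually_mono)
    fix w assume unbounded: "\<forall>m::nat. \<not> S w \<le> of_nat m"
    show "S w = \<infinity>"
    proof (rule ccontr)
      assume "S w \<noteq> \<infinity>"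
      then obtain m where "S w < of_nat m"
        using ennreal_Ex_less_of_nat[of "S w"] by (auto simp: less_top)
      then show False using unbounded less_imp_le by blast
    qed
  qed
  then show ?thesis by (simp add: S_def)
qed

lemma AE_tail_weighted_hits_infinite:
  assumes [measurable]: "\<And>n. A n \<in> sets N" and g: "\<And>n. 0 \<le> g n" "\<And>n. g n \<le> 1"
    and diverges: "\<not> summable (\<lambda>n. g n * prob {w \<in> space M. D 1 w \<in> A n})"
  shows "AE w in M. \<forall>n0. (\<Sum>n. ennreal ((if n0 \<le> n then g n else 0) * indicator (A n) (D n w))) = \<infinity>"
proof (subst AE_all_countable, intro allI AE_weighted_hits_infinite)
  fix n0
  have "summable (\<lambda>n. (if n0 \<le> n then g n else 0) * prob {w \<in> space M. D 1 w \<in> A n})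
      \<longleftrightarrow> summable (\<lambda>n. g n * prob {w \<in> space M. D 1 w \<in> A n})"
    by (intro summable_cong eventually_sequentiallyI[of n0]) simp
  with diverges show "\<not> summable (\<lambda>n. (if n0 \<le> n then g n else 0) * prob {w \<in> space M. D 1 w \<in> A n})"
    by simp
qed (use g in auto)

end

section \<open>Real-valued i.i.d. sequences\<close>

lemma (in real_distribution) exists_quantile:
  assumes "0 < p" "p < 1"
  shows "\<exists>t. p \<le> measure M {..t} \<and> measure M {..<t} \<le> p"
proof -
  define T where "T = {s. p \<le> cdf M s}"
  have "\<forall>\<^sub>F s in at_top. p < cdf M s"
    using order_tendstoD(1)[OF cdf_lim_at_top_prob assms(2)] .
  then obtain s0 where "\<forall>s\<ge>s0. p < cdf M s" by (auto simp: eventually_at_top_linorder)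
  then have "p \<le> cdf M s0" using less_imp_le by blast
  then have T_ne: "T \<noteq> {}" unfolding T_def by blast
  have "\<forall>\<^sub>F s in at_bot. cdf M s < p"
    using order_tendstoD(2)[OF cdf_lim_at_bot assms(1)] .
  then obtain b where b: "\<And>s. s \<le> b \<Longrightarrow> cdf M s < p"
    by (auto simp: eventually_at_bot_linorder)
  have T_bdd: "bdd_below T"
  proof (rule bdd_belowI)
    fix s assume "s \<in> T"
    then have "\<not> cdf M s < p" by (simp add: T_def)
    then show "b \<le> s" using b[of s] by linarith
  qed
  define t where "t = Inf T"
  have "p \<le> cdf M t"
  proof (rule tendsto_lowerbound)
    show "(cdf M \<longlongrightarrow> cdf M t) (at_right t)"
      using cdf_is_right_cont by (simp add: continuous_within)
    have "p \<le> cdf M y" if ty: "t < y" for y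
    proof -
      obtain s where "s \<in> T" "s < y" using cInf_lessD[OF T_ne] ty unfolding t_def by blast
      then show ?thesis using cdf_nondecreasing[of s y] unfolding T_def by simp
    qed
    then show "\<forall>\<^sub>F y in at_right t. p \<le> cdf M y"
      by (intro eventually_at_rightI[of t "t + 1"]) auto
  qed simp
  moreover have "measure M {..<t} \<le> p"
  proof (rule tendsto_upperbound)
    show "(cdf M \<longlongrightarrow> measure M {..<t}) (at_left t)" by (rule cdf_at_left)
    have "cdf M y \<le> p" if yt: "y < t" for y
    proof (rule ccontr)
      assume "\<not> cdf M y \<le> p"
      then have "y \<in> T" by (simp add: T_def)
      then have "t \<le> y" unfolding t_def by (rule cInf_lower[OF _ T_bdd])
      then show False using yt by simp
    qed
    then show "\<forall>\<^sub>F y in at_left t. cdf M y \<le> p"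
      by (intro eventually_at_leftI[of "t - 1"]) auto
  qed simp
  ultimately show ?thesis by (auto simp: cdf_def)
qed

locale real_iid_sequence = iid_sequence M borel D
  for M :: "'a measure" and D :: "nat \<Rightarrow> 'a \<Rightarrow> real"
begin

lemma exists_quantile_D:
  assumes "0 < p" "p < 1"
  shows "\<exists>t. p \<le> prob {w \<in> space M. D 1 w \<le> t} \<and> prob {w \<in> space M. D 1 w < t} \<le> p"
proof -
  have distr_eq: "measure (distr M borel (D 1)) A = prob {w \<in> space M. D 1 w \<in> A}"
    if "A \<in> sets borel" for A
  proof -
    have "D 1 -` A \<inter> space M = {w \<in> space M. D 1 w \<in> A}" by auto
    then show ?thesis using that by (simp add: measure_distr)
  qed
  obtain t where "p \<le> measure (distr M borel (D 1)) {..t}" "measure (distr M borel (D 1)) {..<t} \<le> p"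
    using real_distribution.exists_quantile[OF real_distribution_distr[OF measurable_D] assms] by blast
  then show ?thesis using distr_eq[of "{..t}"] distr_eq[of "{..<t}"] by auto
qed

lemma pred_rank_less [measurable]:
  "Measurable.pred M (\<lambda>w. card {i \<in> {1..<n}. D i w < D n w} < k)"
proof -
  have "Measurable.pred M (\<lambda>w. real (card {i \<in> {1..<n}. D i w < D n w}) < real k)"
    unfolding real_card_filter_eq_sum[OF finite_atLeastLessThan] by measurable
  then show ?thesis by simp
qed

lemma AE_eventually_card_below_less:
  fixes t :: "nat \<Rightarrow> real" and k :: "nat \<Rightarrow> nat"
  assumes small: "\<And>n. 2 \<le> n \<Longrightarrow> 4 * real n * prob {w \<in> space M. D 1 w < t n} \<le> real (k n)"
    and summable: "summable (\<lambda>n. exp (- real (k n) / 2))"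
  shows "AE w in M. \<forall>\<^sub>F n in sequentially. card {i \<in> {1..<n}. D i w < t n} < k n"
proof -
  define G where "G n = {w \<in> space M. real (k n) \<le> real (card {i \<in> {1..<n}. D i w \<in> {..<t n}})}" for n
  have G_meas: "G n \<in> events" for n
    unfolding G_def real_card_filter_eq_sum[OF finite_atLeastLessThan] by measurable
  have G_le: "prob (G n) \<le> exp (- real (k n) / 2)" if n: "2 \<le> n" for n
  proof -
    have "prob (G n) \<le> exp (2 * real n * prob {w \<in> space M. D 1 w \<in> {..<t n}} - real (k n))"
      unfolding G_def by (rule prob_card_hits_ge) simp
    also have "\<dots> \<le> exp (- real (k n) / 2)"
      using small[OF n] by simp
    finally show ?thesis .
  qed
  have "summable (\<lambda>n. prob (G n))"
    by (rule summable_comparison_test'[OF summable, where N=2]) (use G_le in simp)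
  then have "AE w in M. \<forall>\<^sub>F n in sequentially. w \<in> space M - G n"
    using G_meas by (intro borel_cantelli_AE1) (auto simp: emeasure_eq_measure)
  then show ?thesis
    by (rule eventually_mono) (auto elim!: eventually_mono simp: G_def)
qed

lemma obtain_quantiles_eventually_few_below:
  fixes k :: "nat \<Rightarrow> nat"
  assumes k: "\<And>n. 2 \<le> n \<Longrightarrow> 1 \<le> k n" "\<And>n. 2 \<le> n \<Longrightarrow> k n \<le> n"
    and summable: "summable (\<lambda>n. exp (- real (k n) / 2))"
  obtains t where "\<And>n. 2 \<le> n \<Longrightarrow> real (k n) / (4 * real n) \<le> prob {w \<in> space M. D 1 w \<le> t n}"
    and "AE w in M. \<forall>\<^sub>F n in sequentially. card {i \<in> {1..<n}. D i w < t n} < k n"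
proof -
  define p where "p n = real (k n) / (4 * real n)" for n
  have "\<forall>n. \<exists>t. 2 \<le> n \<longrightarrow> p n \<le> prob {w \<in> space M. D 1 w \<le> t} \<and> prob {w \<in> space M. D 1 w < t} \<le> p n"
  proof
    fix n
    have "2 \<le> n \<Longrightarrow> 0 < p n \<and> p n < 1" using k[of n] by (auto simp: p_def field_simps)
    then show "\<exists>t. 2 \<le> n \<longrightarrow> p n \<le> prob {w \<in> space M. D 1 w \<le> t} \<and> prob {w \<in> space M. D 1 w < t} \<le> p n"
      using exists_quantile_D by blast
  qed
  from choice[OF this] obtain t where t: "\<And>n. 2 \<le> n \<Longrightarrow> p n \<le> prob {w \<in> space M. D 1 w \<le> t n}"
      "\<And>n. 2 \<le> n \<Longrightarrow> prob {w \<in> space M. D 1 w < t n} \<le> p n"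
    by blast
  have "AE w in M. \<forall>\<^sub>F n in sequentially. card {i \<in> {1..<n}. D i w < t n} < k n"
  proof (rule AE_eventually_card_below_less[OF _ summable])
    fix n :: nat assume n: "2 \<le> n"
    have "4 * real n * prob {w \<in> space M. D 1 w < t n} \<le> 4 * real n * p n"
      using t(2)[OF n] by (intro mult_left_mono) simp_all
    also have "\<dots> = real (k n)" using n by (simp add: p_def)
    finally show "4 * real n * prob {w \<in> space M. D 1 w < t n} \<le> real (k n)" .
  qed
  with t(1) show thesis unfolding p_def by (rule that)
qed

lemma AE_rank_weighted_sum_infinite:
  fixes g :: "nat \<Rightarrow> real" and k :: "nat \<Rightarrow> nat"
  assumes g: "\<And>n. 0 \<le> g n" "\<And>n. g n \<le> 1"
    and k: "\<And>n. 2 \<le> n \<Longrightarrow> 1 \<le> k n" "\<And>n. 2 \<le> n \<Longrightarrow> k n \<le> n"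
    and diverges: "\<not> summable (\<lambda>n. g n * real (k n) / real n)"
    and summable: "summable (\<lambda>n. exp (- real (k n) / 2))"
  shows "AE w in M. (\<Sum>n. ennreal (if 2 \<le> n \<and> card {i \<in> {1..<n}. D i w < D n w} < k n
    then g n else 0)) = \<infinity>"
proof -
  obtain t where t: "\<And>n. 2 \<le> n \<Longrightarrow> real (k n) / (4 * real n) \<le> prob {w \<in> space M. D 1 w \<le> t n}"
    and few: "AE w in M. \<forall>\<^sub>F n in sequentially. card {i \<in> {1..<n}. D i w < t n} < k n"
    using obtain_quantiles_eventually_few_below[OF k summable] by blast
  have "\<not> summable (\<lambda>n. g n * prob {w \<in> space M. D 1 w \<in> {..t n}})"
  proof
    assume "summable (\<lambda>n. g n * prob {w \<in> space M. D 1 w \<in> {..t n}})"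
    then have "summable (\<lambda>n. 4 * (g n * prob {w \<in> space M. D 1 w \<in> {..t n}}))"
      by (rule summable_mult)
    moreover have "norm (g n * real (k n) / real n) \<le> 4 * (g n * prob {w \<in> space M. D 1 w \<in> {..t n}})"
      if n: "2 \<le> n" for n
      using mult_left_mono[OF t[OF n] g(1)[of n]] n g(1)[of n] by (simp add: field_simps)
    ultimately have "summable (\<lambda>n. g n * real (k n) / real n)"
      by (rule summable_comparison_test')
    then show False using diverges by contradiction
  qed
  then have hits: "AE w in M. \<forall>n0. (\<Sum>n. ennreal ((if n0 \<le> n then g n else 0)
      * indicator {..t n} (D n w))) = \<infinity>"
    by (intro AE_tail_weighted_hits_infinite) (use g in auto)
  show ?thesis
    using few hits
  proof eventually_elim
    case (elim w)
    then obtain n0 where n0: "\<And>n. n0 \<le> n \<Longrightarrow> card {i \<in> {1..<n}. D i w < t n} < k n"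
      by (auto simp: eventually_sequentially)
    have "\<infinity> = (\<Sum>n. ennreal ((if max 2 n0 \<le> n then g n else 0) * indicator {..t n} (D n w)))"
      using spec[OF elim(2), of "max 2 n0"] by (rule sym)
    also have "\<dots> \<le> (\<Sum>n. ennreal (if 2 \<le> n \<and> card {i \<in> {1..<n}. D i w < D n w} < k n then g n else 0))"
    proof (rule suminf_le)
      fix n
      show "ennreal ((if max 2 n0 \<le> n then g n else 0) * indicator {..t n} (D n w))
        \<le> ennreal (if 2 \<le> n \<and> card {i \<in> {1..<n}. D i w < D n w} < k n then g n else 0)"
      proof (cases "max 2 n0 \<le> n \<and> D n w \<le> t n")
        case True
        then have "card {i \<in> {1..<n}. D i w < D n w} \<le> card {i \<in> {1..<n}. D i w < t n}"
          by (intro card_mono) auto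
        with n0[of n] True show ?thesis by simp
      qed auto
    qed simp_all
    finally show ?case by (simp add: top_unique)
  qed
qed

end

lemma iid_sequence_max_1:
  assumes "prob_space M" and X_meas: "\<And>i. 1 \<le> i \<Longrightarrow> X i \<in> M \<rightarrow>\<^sub>M N"
    and indep: "prob_space.indep_vars M (\<lambda>_. N) X {1..}"
    and distr: "\<And>i. 1 \<le> i \<Longrightarrow> distr M N (X i) = distr M N (X 1)"
  shows "iid_sequence M N (\<lambda>i. X (max 1 i))"
proof -
  interpret prob_space M by fact
  show ?thesis
  proof unfold_locales
    show "X (max 1 i) \<in> M \<rightarrow>\<^sub>M N" for i
      using X_meas[of "max 1 i"] by simp
    have "indep_vars (\<lambda>_. N) (\<lambda>i. X (max 1 i)) {1..} \<longleftrightarrow> indep_vars (\<lambda>_. N) X {1..}"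
      by (rule indep_vars_cong) (auto simp: max_absorb2)
    then show "indep_vars (\<lambda>_. N) (\<lambda>i. X (max 1 i)) {1..}"
      using indep by simp
    show "distr M N (X (max 1 i)) = distr M N (X (max 1 1))" if "1 \<le> i" for i
      using distr[OF that] that by (simp add: max_absorb2)
  qed
qed

theorem lemma4:
  fixes M :: "'a measure" and X :: "nat \<Rightarrow> 'a \<Rightarrow> real ^ 'd" and x :: "real ^ 'd"
    and \<beta> \<gamma> C :: real
  assumes "prob_space M"
    and "\<And>i. i \<ge> 1 \<Longrightarrow> X i \<in> borel_measurable M"
    and "prob_space.indep_vars M (\<lambda>_. borel) X {1..}"
    and "\<And>i. i \<ge> 1 \<Longrightarrow> distr M borel (X i) = distr M borel (X 1)"
    and "0 < \<beta>" and "\<beta> < 1" and "0 < \<gamma>" and "\<gamma> \<le> 1"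
    and "\<beta> \<ge> \<gamma>"
    and "C \<ge> 3"
  shows "{w \<in> space M. (\<Sum>n. ennreal (if 2 \<le> n \<and> in_kNN X x \<beta> n w then real n powr (-\<gamma>) else 0))
            \<le> ennreal C} \<in> sets M
      \<and> measure M {w \<in> space M. (\<Sum>n. ennreal (if 2 \<le> n \<and> in_kNN X x \<beta> n w then real n powr (-\<gamma>) else 0))
            \<le> ennreal C} = 0"
proof -
  \<comment> \<open>\<open>X 0\<close> is not part of the sample, hence \<open>max 1 i\<close>.\<close>
  define D where "D i w = norm (X (max 1 i) w - x)" for i w
  interpret X: iid_sequence M borel "\<lambda>i. X (max 1 i)"
    by (rule iid_sequence_max_1[OF assms(1-4)])
  interpret real_iid_sequence M D
    unfolding real_iid_sequence_def D_def by (rule X.iid_sequence_compose) measurable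
  have "in_kNN X x \<beta> n w \<longleftrightarrow> card {i \<in> {1..<n}. D i w < D n w} < k_seq \<beta> n" if "2 \<le> n" for n w
  proof -
    have "{i \<in> {1..<n}. norm (X i w - x) < norm (X n w - x)} = {i \<in> {1..<n}. D i w < D n w}"
      using that by (auto simp: D_def)
    then show ?thesis using in_kNN_iff_rank[OF that assms(5,6), of X x w] by simp
  qed
  then have sum_eq: "(\<Sum>n. ennreal (if 2 \<le> n \<and> in_kNN X x \<beta> n w then real n powr (-\<gamma>) else 0))
    = (\<Sum>n. ennreal (if 2 \<le> n \<and> card {i \<in> {1..<n}. D i w < D n w} < k_seq \<beta> n
        then real n powr (-\<gamma>) else 0))" for w
    by (simp cong: conj_cong)
  have "AE w in M. (\<Sum>n. ennreal (if 2 \<le> n \<and> card {i \<in> {1..<n}. D i w < D n w} < k_seq \<beta> n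
      then real n powr (-\<gamma>) else 0)) = \<infinity>"
  proof (rule AE_rank_weighted_sum_infinite)
    show "\<not> summable (\<lambda>n. real n powr (- \<gamma>) * real (k_seq \<beta> n) / real n)"
      using assms(5,9) by (rule not_summable_powr_k_seq)
    show "summable (\<lambda>n. exp (- real (k_seq \<beta> n) / 2))"
      using assms(5) by (rule summable_exp_neg_k_seq)
    show "2 \<le> n \<Longrightarrow> 1 \<le> k_seq \<beta> n" "2 \<le> n \<Longrightarrow> k_seq \<beta> n \<le> n" for n
      using k_seq_bounds(1)[OF _ assms(5)] k_seq_less[OF _ assms(6)] by (simp_all add: less_imp_le)
    show "real n powr (- \<gamma>) \<le> 1" for n
      using assms(7) by (simp add: powr_neg_le_1)
  qed simp
  then show ?thesis
    unfolding sum_eq by (intro X.prob_le_ennreal_eq_0_if_AE_infinite) measurable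
qed

end
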